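(* Let $n\ge5$, let $A\in\mathrm{SGL}_n(\mathbb{F}_2)$ be nonalternate, and let $\mathbf{x}_1,\mathbf{x}_2,\mathbf{x}_3\in\mathbb{F}_2^n$ be linearly independent with $[\mathbf{x}_i^{\top}A^{-1}\mathbf{x}_j]_{i,j=1}^3=\begin{pmatrix}1&1&0\\1&1&0\\0&0&0\end{pmatrix}$. Then there exists $\mathbf{w}\in\mathbb{F}_2^n$ such that either $\mathbf{w}^{\top}A^{-1}\mathbf{w}=1=\mathbf{w}^{\top}A^{-1}\mathbf{x}_1$ and $\mathbf{w}^{\top}A^{-1}\mathbf{x}_2=0=\mathbf{w}^{\top}A^{-1}\mathbf{x}_3$, or $\mathbf{w}^{\top}A^{-1}\mathbf{w}=1=\mathbf{w}^{\top}A^{-1}\mathbf{x}_2$ and $\mathbf{w}^{\top}A^{-1}\mathbf{x}_1=0=\mathbf{w}^{\top}A^{-1}\mathbf{x}_3$.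
   Context: $\mathrm{SGL}_n(\mathbb{F}_2)$ is the set of invertible symmetric $n\times n$ matrices over the binary field $\mathbb{F}_2$. A symmetric matrix over $\mathbb{F}_2$ is alternate if its diagonal is zero; nonalternate otherwise. *)

theory Defs
  imports "HOL-Analysis.Analysis" "HOL-Library.Z2"
begin

definition bform :: "'a::comm_semiring_1^'n^'n \<Rightarrow> 'a^'n \<Rightarrow> 'a^'n \<Rightarrow> 'a" where
  "bform M x y = (\<Sum>i\<in>UNIV. x $ i * (M *v y) $ i)"

definition symmetric_mat :: "'a^'n^'n \<Rightarrow> bool" where
  "symmetric_mat A \<longleftrightarrow> transpose A = A"

definition alternate_mat :: "'a::zero^'n^'n \<Rightarrow> bool" where
  "alternate_mat A \<longleftrightarrow> symmetric_mat A \<and> (\<forall>i. A $ i $ i = 0)"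

end

theory Submission
  imports Defs
begin

text \<open>
  Over \<open>GF(2)\<close> the quadratic form \<open>q w = w\<^sup>T B w\<close> of a symmetric matrix \<open>B\<close> is additive,
  since the cross terms \<open>2 w\<^sup>T B v\<close> vanish. Because \<open>B = A\<^sup>-\<^sup>1\<close> is nondegenerate and the
  \<open>x\<^sub>i\<close> are independent, some \<open>w\<^sub>1\<close> pairs with \<open>x\<^sub>1, x\<^sub>2, x\<^sub>3\<close> to \<open>1, 0, 0\<close>. If \<open>q w\<^sub>1 = 1\<close>
  we are done; otherwise \<open>w\<^sub>1 + x\<^sub>1\<close> pairs with them to \<open>0, 1, 0\<close> and has
  \<open>q (w\<^sub>1 + x\<^sub>1) = q w\<^sub>1 + q x\<^sub>1 = 1\<close>.
\<close>

lemma matrix_inv: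
  fixes A :: "'a::semiring_1^'n^'n"
  assumes "invertible A"
  shows "A ** matrix_inv A = mat 1" and "matrix_inv A ** A = mat 1"
  using someI_ex[OF assms[unfolded invertible_def]] by (simp_all add: matrix_inv_def)

lemma invertible_matrix_inv:
  fixes A :: "'a::semiring_1^'n^'n"
  shows "invertible A \<Longrightarrow> invertible (matrix_inv A)"
  using matrix_inv invertible_def by blast

lemma symmetric_matrix_inv:
  fixes A :: "'a::comm_semiring_1^'n^'n"
  assumes "symmetric_mat A" and "invertible A"
  shows "symmetric_mat (matrix_inv A)"
proof -
  let ?B = "matrix_inv A"
  have "transpose (?B ** A) = mat 1"
    by (simp add: matrix_inv(2)[OF assms(2)])
  then have "A ** transpose ?B = mat 1"
    using assms(1) by (simp add: matrix_transpose_mul symmetric_mat_def)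
  have "transpose ?B = (?B ** A) ** transpose ?B"
    by (simp add: matrix_inv(2)[OF assms(2)] matrix_mul_lid)
  also have "\<dots> = ?B ** (A ** transpose ?B)"
    by (rule matrix_mul_assoc[symmetric])
  also have "\<dots> = ?B"
    by (simp add: \<open>A ** transpose ?B = mat 1\<close>)
  finally show ?thesis
    by (simp add: symmetric_mat_def)
qed

lemma bform_add_left: "bform M (u + v) x = bform M u x + bform M v x"
  by (simp add: bform_def distrib_right sum.distrib)

lemma bform_add_right: "bform M x (u + v) = bform M x u + bform M x v"
  by (simp add: bform_def matrix_vector_right_distrib distrib_left sum.distrib)

lemma bform_commute:
  assumes "symmetric_mat M"
  shows "bform M x y = bform M y x"
proof -
  have M: "M $ i $ j = M $ j $ i" for i j
    using assms unfolding symmetric_mat_def by (metis transpose_def vec_lambda_beta)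
  have "bform M x y = (\<Sum>i\<in>UNIV. \<Sum>j\<in>UNIV. x $ i * (M $ i $ j * y $ j))"
    by (simp add: bform_def matrix_vector_mult_def sum_distrib_left)
  also have "\<dots> = (\<Sum>j\<in>UNIV. \<Sum>i\<in>UNIV. x $ i * (M $ i $ j * y $ j))"
    by (rule sum.swap)
  also have "\<dots> = (\<Sum>j\<in>UNIV. \<Sum>i\<in>UNIV. y $ j * (M $ j $ i * x $ i))"
    by (simp add: M mult_ac)
  also have "\<dots> = bform M y x"
    by (simp add: bform_def matrix_vector_mult_def sum_distrib_left)
  finally show ?thesis .
qed

lemma bform_diag_add:
  assumes "symmetric_mat M"
  shows "bform M (u + v) (u + v) = bform M u u + bform M v v + 2 * bform M u v"
  by (simp add: bform_add_left bform_add_right bform_commute[OF assms, of v u] mult_2 add_ac)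

lemma linear_functional_expansion:
  fixes g :: "'a::field^'n \<Rightarrow> 'a"
  assumes "Vector_Spaces.linear (*s) (*) g"
  shows "g x = (\<Sum>i\<in>UNIV. x $ i * g (axis i 1))"
proof -
  interpret vector_space_pair "(*s) :: 'a \<Rightarrow> 'a^'n \<Rightarrow> _" "(*) :: 'a \<Rightarrow> 'a \<Rightarrow> 'a"
    by unfold_locales
  have "g x = g (\<Sum>i\<in>UNIV. x $ i *s axis i 1)"
    by (simp add: basis_expansion)
  also have "\<dots> = (\<Sum>i\<in>UNIV. x $ i * g (axis i 1))"
    by (simp add: linear_sum[OF assms] linear_scale[OF assms])
  finally show ?thesis .
qed

lemma bform_interpolate:
  fixes M :: "'a::field^'n^'n"
  assumes "invertible M" and "vec.independent S"
  shows "\<exists>w. \<forall>x\<in>S. bform M w x = f x"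
proof -
  interpret vector_space_pair "(*s) :: 'a \<Rightarrow> 'a^'n \<Rightarrow> _" "(*) :: 'a \<Rightarrow> 'a \<Rightarrow> 'a"
    by unfold_locales
  obtain g where g: "Vector_Spaces.linear (*s) (*) g" "\<forall>x\<in>S. g x = f x"
    using linear_independent_extend[OF assms(2)] by blast
  define h where "h = g \<circ> (*v) (matrix_inv M)"
  have h: "Vector_Spaces.linear (*s) (*) h"
    unfolding h_def by (rule Vector_Spaces.linear_compose[OF matrix_vector_mul_linear_gen g(1)])
  have "bform M (\<chi> i. h (axis i 1)) x = g x" for x
  proof -
    have "bform M (\<chi> i. h (axis i 1)) x = h (M *v x)"
      by (simp add: bform_def linear_functional_expansion[OF h, of "M *v x"] mult.commute)
    also have "\<dots> = g x"
      by (simp add: h_def matrix_vector_mul_assoc matrix_inv(2)[OF assms(1)])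
    finally show ?thesis .
  qed
  then show ?thesis
    using g(2) by metis
qed

theorem lemma4p1:
  fixes A :: "bit^'n^'n" and x1 x2 x3 :: "bit^'n"
  assumes "CARD('n) \<ge> 5"
    and "symmetric_mat A" and "invertible A" and "\<not> alternate_mat A"
    and "distinct [x1, x2, x3]" and "vec.independent {x1, x2, x3}"
    and "bform (matrix_inv A) x1 x1 = 1" and "bform (matrix_inv A) x1 x2 = 1"
    and "bform (matrix_inv A) x1 x3 = 0"
    and "bform (matrix_inv A) x2 x1 = 1" and "bform (matrix_inv A) x2 x2 = 1"
    and "bform (matrix_inv A) x2 x3 = 0"
    and "bform (matrix_inv A) x3 x1 = 0" and "bform (matrix_inv A) x3 x2 = 0"
    and "bform (matrix_inv A) x3 x3 = 0"
  shows "\<exists>w :: bit^'n.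
           (bform (matrix_inv A) w w = 1 \<and> bform (matrix_inv A) w x1 = 1 \<and>
            bform (matrix_inv A) w x2 = 0 \<and> bform (matrix_inv A) w x3 = 0) \<or>
           (bform (matrix_inv A) w w = 1 \<and> bform (matrix_inv A) w x2 = 1 \<and>
            bform (matrix_inv A) w x1 = 0 \<and> bform (matrix_inv A) w x3 = 0)"
proof -
  let ?B = "matrix_inv A"
  obtain w1 where w1: "bform ?B w1 x1 = 1" "bform ?B w1 x2 = 0" "bform ?B w1 x3 = 0"
    using bform_interpolate[OF invertible_matrix_inv[OF assms(3)] assms(6),
        of "\<lambda>x. if x = x1 then 1 else 0"] assms(5)
    by auto
  show ?thesis
  proof (cases "bform ?B w1 w1 = 1")
    case True
    with w1 show ?thesis by blast
  next
    case False
    have "bform ?B (w1 + x1) (w1 + x1) = 1"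
      using bform_diag_add[OF symmetric_matrix_inv[OF assms(2,3)], of w1 x1] False assms(7)
      by simp
    moreover have "bform ?B (w1 + x1) x1 = 0" "bform ?B (w1 + x1) x2 = 1"
      "bform ?B (w1 + x1) x3 = 0"
      using w1 assms(7-9) by (simp_all add: bform_add_left)
    ultimately show ?thesis by blast
  qed
qed

end
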